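(* Let $\mathbf{u}=(u_1,u_2)\in\mathbb{R}[x_1,x_2]_d^2$ and $p\in\Sigma[x_1,x_2]_{2d}$, and suppose $\nabla f_p(\mathbf{u})=0$ and $\nabla^2 f_p(\mathbf{u})\succeq0$. Let $g,h,u_1',u_2'$ be real binary forms with $(u_1,u_2)=(u_1'gh,u_2'gh)$, $\gcd(u_1,u_2)=gh$, $\gcd(u_1',u_2')=1$, $\gcd(u_1'^2+u_2'^2,g)=1$, and every (possibly complex) root of $h$ a root of $u_1'^2+u_2'^2$. Let $k=\deg(h)$ and let $\mathbf{w}=(u_1'gx_1^k,\,u_2'gx_1^k)\in\mathbb{R}[x_1,x_2]_d^2$. If $$p\in\operatorname{im}(\mathcal{A}_{\mathbf{w}})+\operatorname{cone}\big(\sigma(\ker(\mathcal{A}_{\mathbf{u}}))\big),$$ then $f_p(\mathbf{u})=0$.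
   Context: $\mathbb{R}[x_1,x_2]_n$ denotes the space of real binary forms of degree $n$, and $\Sigma[x_1,x_2]_{2d}$ the cone of sums of squares of binary forms of degree $d$. For $\mathbf{a}=(a_1,a_2)\in\mathbb{R}[x_1,x_2]_d^2$, $\mathcal{A}_{\mathbf{a}}:\mathbb{R}[x_1,x_2]_d^2\to\mathbb{R}[x_1,x_2]_{2d}$ is $(v_1,v_2)\mapsto a_1v_1+a_2v_2$; $\sigma(v_1,v_2)=v_1^2+v_2^2$; $\operatorname{cone}(S)$ is the set of nonnegative combinations. A root of a binary form is a nonzero complex zero up to scaling; gcd is the common divisor of highest degree, coprime means gcd constant. Fix any inner product $\langle\cdot,\cdot\rangle$ on $\mathbb{R}[x_1,x_2]_{2d}$ with norm $\|\cdot\|$ and let $f_p(\mathbf{u})=\|\sigma(\mathbf{u})-p\|^2$. $\nabla f_p(\mathbf{u})=0$ means $\langle\mathcal{A}_{\mathbf{u}}(\mathbf{v}),\sigma(\mathbf{u})-p\rangle=0$ for all $\mathbf{v}\in\mathbb{R}[x_1,x_2]_d^2$, and $\nabla^2 f_p(\mathbf{u})\succeq0$ means $\langle\sigma(\mathbf{v}),\sigma(\mathbf{u})-p\rangle+2\|\mathcal{A}_{\mathbf{u}}(\mathbf{v})\|^2\ge0$ for all $\mathbf{v}\in\mathbb{R}[x_1,x_2]_d^2$. *)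

theory Defs
  imports "HOL-Computational_Algebra.Computational_Algebra"
begin

text \<open>Real binary forms are represented as bivariate polynomials of type
  real poly poly: the outer variable is x1, the inner (coefficient) variable is x2.\<close>

type_synonym bpoly = "real poly poly"

definition X1 :: bpoly where "X1 = [:0, 1:]"
definition X2 :: bpoly where "X2 = [:[:0, 1:]:]"

definition homogeneous :: "nat \<Rightarrow> bpoly \<Rightarrow> bool" where
  "homogeneous n P \<longleftrightarrow> (\<forall>i j. coeff (coeff P i) j \<noteq> 0 \<longrightarrow> i + j = n)"

definition forms :: "nat \<Rightarrow> bpoly set" where
  "forms n = {P. homogeneous n P}"

definition is_form :: "bpoly \<Rightarrow> bool" where
  "is_form P \<longleftrightarrow> (\<exists>n. homogeneous n P)"

definition rscale :: "real \<Rightarrow> bpoly \<Rightarrow> bpoly" where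
  "rscale c P = smult [:c:] P"

definition sos_forms :: "nat \<Rightarrow> bpoly set" where
  "sos_forms d = {p. \<exists>qs. set qs \<subseteq> forms d \<and> p = sum_list (map (\<lambda>q. q ^ 2) qs)}"

definition A_op :: "bpoly \<times> bpoly \<Rightarrow> bpoly \<times> bpoly \<Rightarrow> bpoly" where
  "A_op a v = fst a * fst v + snd a * snd v"

definition sigma :: "bpoly \<times> bpoly \<Rightarrow> bpoly" where
  "sigma v = fst v ^ 2 + snd v ^ 2"

definition A_image :: "nat \<Rightarrow> bpoly \<times> bpoly \<Rightarrow> bpoly set" where
  "A_image d a = A_op a ` (forms d \<times> forms d)"

definition A_kernel :: "nat \<Rightarrow> bpoly \<times> bpoly \<Rightarrow> (bpoly \<times> bpoly) set" where
  "A_kernel d a = {v \<in> forms d \<times> forms d. A_op a v = 0}"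

definition cone_of :: "bpoly set \<Rightarrow> bpoly set" where
  "cone_of S = {x. \<exists>cs ss. length cs = length ss \<and> (\<forall>c\<in>set cs. c \<ge> 0) \<and> set ss \<subseteq> S
                  \<and> x = sum_list (map2 rscale cs ss)}"

definition set_plus_b :: "bpoly set \<Rightarrow> bpoly set \<Rightarrow> bpoly set" where
  "set_plus_b A B = {a + b | a b. a \<in> A \<and> b \<in> B}"

definition inner_product_on :: "nat \<Rightarrow> (bpoly \<Rightarrow> bpoly \<Rightarrow> real) \<Rightarrow> bool" where
  "inner_product_on n ip \<longleftrightarrow>
     (\<forall>x\<in>forms n. \<forall>y\<in>forms n. ip x y = ip y x) \<and>
     (\<forall>x\<in>forms n. \<forall>y\<in>forms n. \<forall>z\<in>forms n. ip (x + y) z = ip x z + ip y z) \<and>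
     (\<forall>c. \<forall>x\<in>forms n. \<forall>y\<in>forms n. ip (rscale c x) y = c * ip x y) \<and>
     (\<forall>x\<in>forms n. x \<noteq> 0 \<longrightarrow> ip x x > 0)"

definition f_obj :: "(bpoly \<Rightarrow> bpoly \<Rightarrow> real) \<Rightarrow> bpoly \<Rightarrow> bpoly \<times> bpoly \<Rightarrow> real" where
  "f_obj ip p u = ip (sigma u - p) (sigma u - p)"

definition grad_zero :: "nat \<Rightarrow> (bpoly \<Rightarrow> bpoly \<Rightarrow> real) \<Rightarrow> bpoly \<Rightarrow> bpoly \<times> bpoly \<Rightarrow> bool" where
  "grad_zero d ip p u \<longleftrightarrow>
     (\<forall>v \<in> forms d \<times> forms d. ip (A_op u v) (sigma u - p) = 0)"

definition hess_psd :: "nat \<Rightarrow> (bpoly \<Rightarrow> bpoly \<Rightarrow> real) \<Rightarrow> bpoly \<Rightarrow> bpoly \<times> bpoly \<Rightarrow> bool" where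
  "hess_psd d ip p u \<longleftrightarrow>
     (\<forall>v \<in> forms d \<times> forms d.
        ip (sigma v) (sigma u - p) + 2 * ip (A_op u v) (A_op u v) \<ge> 0)"

definition eval_form :: "bpoly \<Rightarrow> complex \<Rightarrow> complex \<Rightarrow> complex" where
  "eval_form P z1 z2 = poly (map_poly (\<lambda>c. poly (map_poly complex_of_real c) z2) P) z1"

definition is_root :: "bpoly \<Rightarrow> complex \<times> complex \<Rightarrow> bool" where
  "is_root P z \<longleftrightarrow> z \<noteq> (0, 0) \<and> eval_form P (fst z) (snd z) = 0"

definition is_gcd :: "bpoly \<Rightarrow> bpoly \<Rightarrow> bpoly \<Rightarrow> bool" where
  "is_gcd G a b \<longleftrightarrow> G dvd a \<and> G dvd b \<and> (\<forall>c. c dvd a \<and> c dvd b \<longrightarrow> c dvd G)"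

end

(*
  Let r = sigma(u) - p and ell x = <x, r>. Stationarity says ell vanishes on the image of A_u;
  as sigma(u) = A_u(u), this gives f_p(u) = ell r = - ell p, so it suffices to show ell p >= 0.
  The Hessian condition makes ell (sigma v) >= 0 for v in ker A_u, which handles the cone part of p.

  For the image part write w = (u1' g, u2' g), so u = h w. Since u1', u2' are coprime,
  u1'^2 + u2'^2 has no nontrivial real zero, hence neither has h: thus k = 2j,
  h = c (a^2 + b^2) for forms a, b of degree j, and by Bezout x1^k = a alpha + b beta.
  For every form mu of degree k, (-mu w2, mu w1) lies in ker A_u with
  sigma = (w1^2 + w2^2) mu^2. If mu^2 + mu'^2 = h rho, stationarity along rho w shows
  ell ((w1^2 + w2^2) (mu^2 + mu'^2)) = 0, so both (nonnegative) curvatures vanish; this applies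
  to mu = a alpha and mu = b beta. Along a kernel direction of zero curvature the Hessian
  condition forces the mixed term to vanish, which gives ell (mu A_w(v)) = 0; summing over
  the two choices of mu yields ell (A_(x1^k w)(v)) = 0.
*)

theory Submission
  imports Defs "HOL-Computational_Algebra.Field_as_Ring"
begin

lemma homogeneous_0 [simp]: "homogeneous n 0"
  by (simp add: homogeneous_def)

lemma homogeneous_add: "homogeneous n F \<Longrightarrow> homogeneous n G \<Longrightarrow> homogeneous n (F + G)"
  unfolding homogeneous_def by (metis add.right_neutral coeff_add)

lemma homogeneous_uminus: "homogeneous n F \<Longrightarrow> homogeneous n (- F)"
  unfolding homogeneous_def by simp

lemma homogeneous_diff: "homogeneous n F \<Longrightarrow> homogeneous n G \<Longrightarrow> homogeneous n (F - G)"
  using homogeneous_add[of n F "- G"] homogeneous_uminus by simp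

lemma homogeneous_degree_unique:
  assumes "F \<noteq> 0" "homogeneous n F" "homogeneous m F"
  shows "n = m"
proof -
  obtain i where "coeff F i \<noteq> 0" using assms(1) by (metis leading_coeff_0_iff)
  then obtain j where "coeff (coeff F i) j \<noteq> 0" by (metis leading_coeff_0_iff)
  then show ?thesis using assms(2,3) unfolding homogeneous_def by metis
qed

definition eval_real :: "bpoly \<Rightarrow> real \<Rightarrow> real \<Rightarrow> real" where
  "eval_real F x y = poly (poly F [:x:]) y"

lemma eval_real_add [simp]: "eval_real (F + G) x y = eval_real F x y + eval_real G x y"
  by (simp add: eval_real_def)

lemma eval_real_mult [simp]: "eval_real (F * G) x y = eval_real F x y * eval_real G x y"
  by (simp add: eval_real_def)

lemma eval_real_power [simp]: "eval_real (F ^ n) x y = eval_real F x y ^ n"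
  by (simp add: eval_real_def poly_power)

lemma eval_real_0 [simp]: "eval_real 0 x y = 0"
  by (simp add: eval_real_def)

lemma eval_real_rscale [simp]: "eval_real (rscale c F) x y = c * eval_real F x y"
  by (simp add: eval_real_def rscale_def)

lemma eval_real_sum: "eval_real (\<Sum>i\<in>A. F i) x y = (\<Sum>i\<in>A. eval_real (F i) x y)"
  by (simp add: eval_real_def poly_sum)

lemma eval_real_monom [simp]: "eval_real (monom (monom c m) i) x y = c * y ^ m * x ^ i"
  by (simp add: eval_real_def poly_monom poly_power)

lemma eval_real_pCons: "eval_real (pCons a F) x y = poly a y + x * eval_real F x y"
  by (simp add: eval_real_def)

lemma coeff_poly_const: "coeff (poly D [:x:]) j = poly (map_poly (\<lambda>c. coeff c j) D) x"
  by (induction D) (simp_all add: map_poly_pCons)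

lemma bpoly_eqI_eval_real:
  assumes "\<And>x y. y \<noteq> 0 \<Longrightarrow> eval_real F x y = eval_real G x y"
  shows "F = G"
proof -
  define D where "D = F - G"
  have D_vanishes: "poly (poly D [:x:]) y = 0" if "y \<noteq> 0" for x y
    using assms that by (simp add: D_def eval_real_def)
  have D_slice: "poly D [:x:] = 0" for x
  proof (rule ccontr)
    assume "poly D [:x:] \<noteq> 0"
    then have "finite {y. poly (poly D [:x:]) y = 0}" by (rule poly_roots_finite)
    moreover have "UNIV - {0} \<subseteq> {y. poly (poly D [:x:]) y = 0}"
      using D_vanishes by auto
    moreover have "infinite (UNIV - {0::real})" by (simp add: infinite_UNIV_char_0)
    ultimately show False by (meson finite_subset)
  qed
  have "map_poly (\<lambda>c. coeff c j) D = 0" for j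
    using D_slice coeff_poly_const[of D _ j] by (metis coeff_0 poly_all_0_iff_0)
  then have "coeff (coeff D i) j = 0" for i j
    by (metis coeff_0 coeff_map_poly)
  then have "D = 0" by (metis leading_coeff_0_iff)
  then show ?thesis by (simp add: D_def)
qed

definition homogenize :: "nat \<Rightarrow> real poly \<Rightarrow> bpoly" where
  "homogenize n P = (\<Sum>i\<le>n. monom (monom (coeff P i) (n - i)) i)"

definition dehomogenize :: "bpoly \<Rightarrow> real poly" where
  "dehomogenize F = map_poly (\<lambda>q. poly q 1) F"

lemma homogenize_0 [simp]: "homogenize n 0 = 0"
  by (simp add: homogenize_def)

lemma eval_real_homogenize:
  "eval_real (homogenize n P) x y = (\<Sum>i\<le>n. coeff P i * y ^ (n - i) * x ^ i)"
  by (simp add: homogenize_def eval_real_sum)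

lemma eval_real_homogenize_nonzero:
  assumes "degree P \<le> n" "y \<noteq> 0"
  shows "eval_real (homogenize n P) x y = y ^ n * poly P (x / y)"
proof -
  have "poly P (x / y) = (\<Sum>i\<le>n. coeff P i * (x / y) ^ i)"
    by (subst poly_as_sum_of_monoms'[OF assms(1), symmetric]) (simp add: poly_sum poly_monom)
  then have "y ^ n * poly P (x / y) = (\<Sum>i\<le>n. y ^ n * (coeff P i * (x / y) ^ i))"
    by (simp add: sum_distrib_left)
  also have "\<dots> = (\<Sum>i\<le>n. coeff P i * y ^ (n - i) * x ^ i)"
  proof (rule sum.cong)
    fix i assume "i \<in> {..n}"
    then have "y ^ n = y ^ (n - i) * y ^ i" by (simp add: power_add[symmetric])
    then show "y ^ n * (coeff P i * (x / y) ^ i) = coeff P i * y ^ (n - i) * x ^ i"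
      using assms(2) by (simp add: power_divide field_simps)
  qed simp
  finally show ?thesis by (simp add: eval_real_homogenize)
qed

lemma eval_real_homogenize_1: "degree P \<le> n \<Longrightarrow> eval_real (homogenize n P) x 1 = poly P x"
  by (simp add: eval_real_homogenize_nonzero)

lemma eval_real_homogenize_0: "eval_real (homogenize n P) x 0 = coeff P n * x ^ n"
proof -
  have "eval_real (homogenize n P) x 0 = (\<Sum>i\<le>n. if i = n then coeff P i * x ^ i else 0)"
    unfolding eval_real_homogenize by (rule sum.cong) auto
  then show ?thesis by simp
qed

lemma homogenize_mult:
  assumes "degree P \<le> n" "degree Q \<le> m"
  shows "homogenize (n + m) (P * Q) = homogenize n P * homogenize m Q"
proof (rule bpoly_eqI_eval_real)
  fix x y :: real assume "y \<noteq> 0"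
  have "degree (P * Q) \<le> n + m" using assms degree_mult_le[of P Q] by linarith
  then show "eval_real (homogenize (n + m) (P * Q)) x y = eval_real (homogenize n P * homogenize m Q) x y"
    using assms \<open>y \<noteq> 0\<close> by (simp add: eval_real_homogenize_nonzero power_add)
qed

lemma homogenize_add: "homogenize n (P + Q) = homogenize n P + homogenize n Q"
  by (rule bpoly_eqI_eval_real) (simp add: eval_real_homogenize algebra_simps sum.distrib)

lemma homogenize_smult: "homogenize n (smult c P) = rscale c (homogenize n P)"
  by (rule bpoly_eqI_eval_real) (simp add: eval_real_homogenize algebra_simps sum_distrib_left)

lemma coeff_homogenize:
  "coeff (homogenize n P) i = (if i \<le> n then monom (coeff P i) (n - i) else 0)"
  unfolding homogenize_def coeff_sum by (simp add: coeff_monom)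

lemma homogeneous_homogenize: "homogeneous n (homogenize n P)"
  unfolding homogeneous_def coeff_homogenize by (auto simp: coeff_monom split: if_splits)

lemma homogeneous_coeff:
  assumes "homogeneous n F"
  shows "coeff F i = (if i \<le> n then monom (coeff (coeff F i) (n - i)) (n - i) else 0)"
proof (rule poly_eqI)
  fix j
  show "coeff (coeff F i) j = coeff (if i \<le> n then monom (coeff (coeff F i) (n - i)) (n - i) else 0) j"
  proof (cases "coeff (coeff F i) j = 0")
    case False
    then have "i + j = n" using assms unfolding homogeneous_def by blast
    then show ?thesis by (auto simp: coeff_monom)
  qed (auto simp: coeff_monom)
qed

lemma homogeneous_poly_coeff_1:
  "homogeneous n F \<Longrightarrow> poly (coeff F i) 1 = (if i \<le> n then coeff (coeff F i) (n - i) else 0)"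
  by (subst homogeneous_coeff) (auto simp: poly_monom)

lemma degree_dehomogenize: "homogeneous n F \<Longrightarrow> degree (dehomogenize F) \<le> n"
  by (rule degree_le) (auto simp: dehomogenize_def coeff_map_poly homogeneous_poly_coeff_1)

lemma homogenize_dehomogenize:
  assumes "homogeneous n F"
  shows "homogenize n (dehomogenize F) = F"
proof (rule poly_eqI)
  fix i
  show "coeff (homogenize n (dehomogenize F)) i = coeff F i"
    using homogeneous_coeff[OF assms, of i]
    by (auto simp: coeff_homogenize dehomogenize_def coeff_map_poly homogeneous_poly_coeff_1[OF assms])
qed

lemma homogeneous_iff_homogenize:
  "homogeneous n F \<longleftrightarrow> (\<exists>P. degree P \<le> n \<and> F = homogenize n P)"
  using homogenize_dehomogenize degree_dehomogenize homogeneous_homogenize by metis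

lemma homogeneous_mult:
  "homogeneous n F \<Longrightarrow> homogeneous m G \<Longrightarrow> homogeneous (n + m) (F * G)"
  using homogenize_mult homogeneous_homogenize homogeneous_iff_homogenize by metis

lemma homogeneous_power2: "homogeneous n F \<Longrightarrow> homogeneous (2 * n) (F\<^sup>2)"
  using homogeneous_mult[of n F n F] by (simp add: power2_eq_square mult_2)

lemma homogeneous_rscale: "homogeneous n F \<Longrightarrow> homogeneous n (rscale c F)"
  unfolding homogeneous_def rscale_def by simp

lemma homogeneous_sigma:
  "homogeneous n x \<Longrightarrow> homogeneous n y \<Longrightarrow> homogeneous (2 * n) (sigma (x, y))"
  unfolding sigma_def by (simp add: homogeneous_add homogeneous_power2)

lemma homogeneous_A_op:
  assumes "homogeneous n a1" "homogeneous n a2" "homogeneous n v1" "homogeneous n v2"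
  shows "homogeneous (2 * n) (A_op (a1, a2) (v1, v2))"
  unfolding A_op_def mult_2 using assms by (simp add: homogeneous_add homogeneous_mult)

lemma homogeneous_sos_forms: "p \<in> sos_forms d \<Longrightarrow> homogeneous (2 * d) p"
proof -
  assume "p \<in> sos_forms d"
  then obtain qs where qs: "set qs \<subseteq> forms d" "p = sum_list (map (\<lambda>q. q ^ 2) qs)"
    by (auto simp: sos_forms_def)
  have "homogeneous (2 * d) (sum_list (map (\<lambda>q. q ^ 2) qs))" using qs(1)
    by (induction qs) (auto simp: forms_def intro!: homogeneous_add homogeneous_power2)
  then show ?thesis using qs(2) by simp
qed

lemma homogeneous_cofactor:
  assumes "homogeneous n F" "homogeneous k h" "h \<noteq> 0" "homogeneous d (F * h)"
  shows "homogeneous (d - k) F \<and> (F \<noteq> 0 \<longrightarrow> k \<le> d)"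
proof (cases "F = 0")
  case False
  have "homogeneous (n + k) (F * h)" using assms(1,2) by (rule homogeneous_mult)
  moreover have "F * h \<noteq> 0" using False assms(3) by simp
  ultimately have "n + k = d" using assms(4) homogeneous_degree_unique by blast
  then have "d - k = n" "k \<le> d" by auto
  then show ?thesis using assms(1) by simp
qed simp

lemma poly_map_of_real: "poly (map_poly of_real p) (of_real x :: complex) = of_real (poly p x)"
  by (induction p) (simp_all add: map_poly_pCons)

lemma eval_form_of_real: "eval_form F (of_real x) (of_real y) = of_real (eval_real F x y)"
  unfolding eval_form_def
  by (induction F) (simp_all add: map_poly_pCons eval_real_pCons poly_map_of_real)

text \<open>The linear form vanishing at \<open>(x, y)\<close>: \<open>x\<^sub>1 - (x / y) x\<^sub>2\<close>, or \<open>x\<^sub>2\<close> if \<open>y = 0\<close>.\<close>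
definition linear_form :: "real \<Rightarrow> real \<Rightarrow> bpoly" where
  "linear_form x y = (if y \<noteq> 0 then homogenize 1 [:- x / y, 1:] else homogenize 1 1)"

lemma linear_form_dvd:
  assumes "homogeneous n F" "(x, y) \<noteq> (0, 0)" "eval_real F x y = 0"
  shows "linear_form x y dvd F"
proof -
  define P where "P = dehomogenize F"
  have F: "F = homogenize n P" and deg_P: "degree P \<le> n"
    using assms(1) homogenize_dehomogenize degree_dehomogenize P_def by auto
  show ?thesis
  proof (cases "P = 0")
    case P_nonzero: False
    show ?thesis
    proof (cases "y = 0")
      case False
      have "y ^ n * poly P (x / y) = 0"
        using assms(3) eval_real_homogenize_nonzero[OF deg_P False] F by simp
      then have "poly P (x / y) = 0" using False by simp
      then obtain Q where Q: "P = [:- (x / y), 1:] * Q" using poly_eq_0_iff_dvd by (metis dvdE)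
      have "Q \<noteq> 0" using P_nonzero Q by auto
      then have "degree P = degree [:- (x / y), 1:] + degree Q"
        unfolding Q by (intro degree_mult_eq) auto
      then have "degree P = 1 + degree Q" by simp
      then have n: "n = 1 + (n - 1)" and deg_Q: "degree Q \<le> n - 1" using deg_P by auto
      have "F = homogenize (1 + (n - 1)) ([:- (x / y), 1:] * Q)" using F Q n by simp
      also have "\<dots> = homogenize 1 [:- (x / y), 1:] * homogenize (n - 1) Q"
        by (rule homogenize_mult) (use deg_Q in auto)
      finally show ?thesis using False by (simp add: linear_form_def)
    next
      case True
      then have "x \<noteq> 0" using assms(2) by auto
      have "coeff P n * x ^ n = 0" using assms(3) F True eval_real_homogenize_0 by simp
      then have "coeff P n = 0" using \<open>x \<noteq> 0\<close> by simp
      then have "degree P \<noteq> n" using P_nonzero by (metis leading_coeff_0_iff)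
      then have n: "n = 1 + (n - 1)" and deg_P': "degree P \<le> n - 1" using deg_P by auto
      have "F = homogenize (1 + (n - 1)) (1 * P)" using F n by simp
      also have "\<dots> = homogenize 1 1 * homogenize (n - 1) P"
        by (rule homogenize_mult) (use deg_P' in auto)
      finally show ?thesis using True by (simp add: linear_form_def)
    qed
  qed (simp add: F)
qed

lemma linear_form_not_unit: "\<not> is_unit (linear_form x y)"
proof
  assume "is_unit (linear_form x y)"
  then obtain c where c: "linear_form x y = [:c:]" "is_unit c" using is_unit_poly_iff by blast
  show False
  proof (cases "y = 0")
    case False
    then have "coeff (linear_form x y) 1 = 1" by (simp add: linear_form_def coeff_homogenize)
    then show False using c(1) by simp
  next
    case True
    then have "coeff (linear_form x y) 0 = monom 1 1" by (simp add: linear_form_def coeff_homogenize)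
    then have "c = monom 1 1" using c(1) by simp
    then show False using c(2) is_unit_iff_degree[of "monom (1::real) 1"] by (simp add: degree_monom_eq)
  qed
qed

lemma coprime_forms_no_common_real_zero:
  assumes "coprime F G" "homogeneous n F" "homogeneous m G" "(x, y) \<noteq> (0, 0)"
    and "eval_real F x y = 0" "eval_real G x y = 0"
  shows False
  by (meson assms linear_form_dvd linear_form_not_unit coprime_common_divisor)

lemma map_poly_cnj_mult: "map_poly cnj (p * q) = map_poly cnj p * map_poly cnj q"
  by (rule poly_eq_poly_eq_iff[THEN iffD1]) (auto simp: fun_eq_iff)

lemma map_poly_cnj_cnj: "map_poly cnj (map_poly cnj p) = p"
  by (rule poly_eqI) (simp add: coeff_map_poly)

text \<open>Pair each non-real root with its conjugate and keep the one in the upper half plane.\<close>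
lemma real_coeffs_no_real_roots_conj_factor:
  fixes H :: "complex poly"
  assumes "map_poly cnj H = H" "\<forall>x::real. poly H (of_real x) \<noteq> 0"
  shows "\<exists>P. H = smult (lead_coeff H) (P * map_poly cnj P) \<and> lead_coeff P = 1 \<and>
             (\<forall>w. poly P w = 0 \<longrightarrow> Im w > 0)"
  using assms
proof (induction "degree H" arbitrary: H rule: less_induct)
  case less
  show ?case
  proof (cases "degree H = 0")
    case True
    then obtain c where "H = [:c:]" using degree_eq_zeroE by blast
    then show ?thesis by (intro exI[of _ 1]) simp
  next
    case False
    then have "\<not> constant (poly H)" by (simp add: constant_degree)
    then obtain z where z: "poly H z = 0" using fundamental_theorem_of_algebra by blast
    have real: "\<And>n. coeff H n \<in> \<real>"
      using less.prems(1) by (metis Reals_cnj_iff coeff_map_poly complex_cnj_zero)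
    have "Im z \<noteq> 0"
    proof
      assume "Im z = 0"
      then have "z = of_real (Re z)" by (simp add: complex_eq_iff)
      then show False using z less.prems(2) by metis
    qed
    define z' where "z' = (if Im z > 0 then z else cnj z)"
    have Im_z': "Im z' > 0" using \<open>Im z \<noteq> 0\<close> by (auto simp: z'_def)
    have root: "poly H z' = 0" using z real_poly_cnj_root_iff[OF real] by (auto simp: z'_def)
    then have root_cnj: "poly H (cnj z') = 0" using real_poly_cnj_root_iff[OF real] by simp
    obtain H1 where H1: "H = [:- z', 1:] * H1" using root poly_eq_0_iff_dvd by (metis dvdE)
    have "cnj z' \<noteq> z'" using Im_z' by (auto simp: complex_eq_iff)
    then have "poly H1 (cnj z') = 0" using root_cnj H1 by simp
    then obtain H2 where H2: "H1 = [:- cnj z', 1:] * H2" using poly_eq_0_iff_dvd by (metis dvdE)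
    define Q where "Q = [:- z', 1:] * [:- cnj z', 1:]"
    have H_eq: "H = Q * H2" unfolding Q_def H1 H2 by (simp only: mult.assoc)
    have cnj_Q: "map_poly cnj Q = Q"
      by (simp add: Q_def map_poly_cnj_mult map_poly_pCons mult.commute)
    have Q_nonzero: "Q \<noteq> 0" by (simp add: Q_def)
    have "Q * map_poly cnj H2 = Q * H2"
      using less.prems(1) H_eq by (metis cnj_Q map_poly_cnj_mult)
    then have cnj_H2: "map_poly cnj H2 = H2" using Q_nonzero by simp
    have "H2 \<noteq> 0" using H_eq less.prems(2) by (metis mult_zero_right poly_0)
    then have "degree H = degree Q + degree H2" using H_eq Q_nonzero by (simp add: degree_mult_eq)
    moreover have "degree Q = 2" by (simp add: Q_def degree_mult_eq)
    moreover have "\<forall>x::real. poly H2 (of_real x) \<noteq> 0" using less.prems(2) H_eq by auto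
    ultimately obtain P2 where P2: "H2 = smult (lead_coeff H2) (P2 * map_poly cnj P2)"
        "lead_coeff P2 = 1" "\<forall>w. poly P2 w = 0 \<longrightarrow> Im w > 0"
      using less.hyps[of H2] cnj_H2 by auto
    define P where "P = [:- z', 1:] * P2"
    have "H = smult (lead_coeff H) (P * map_poly cnj P)"
    proof -
      have "lead_coeff Q = 1" by (simp add: Q_def lead_coeff_mult)
      then have lc: "lead_coeff H = lead_coeff H2" using H_eq by (simp add: lead_coeff_mult)
      have "map_poly cnj P = [:- cnj z', 1:] * map_poly cnj P2"
        unfolding P_def map_poly_cnj_mult by (simp add: map_poly_pCons)
      then have "P * map_poly cnj P = Q * (P2 * map_poly cnj P2)"
        unfolding P_def Q_def by (simp only: ac_simps)
      moreover have "H = smult (lead_coeff H2) (Q * (P2 * map_poly cnj P2))"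
        using H_eq P2(1) by (metis mult_smult_right)
      ultimately show ?thesis unfolding lc by simp
    qed
    moreover have "lead_coeff P = 1" unfolding P_def lead_coeff_mult using P2(2) by simp
    moreover have "\<forall>w. poly P w = 0 \<longrightarrow> Im w > 0" using P2(3) Im_z' by (auto simp: P_def)
    ultimately show ?thesis by blast
  qed
qed

abbreviation complex_poly :: "real poly \<Rightarrow> complex poly" where
  "complex_poly \<equiv> map_poly of_real"

lemma complex_poly_mult: "complex_poly (p * q) = complex_poly p * complex_poly q"
  by (rule poly_eqI) (simp add: coeff_mult coeff_map_poly)

lemma complex_poly_add: "complex_poly (p + q) = complex_poly p + complex_poly q"
  by (rule poly_eqI) (simp add: coeff_map_poly)

lemma complex_poly_smult: "complex_poly (smult c p) = smult (of_real c) (complex_poly p)"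
  by (rule poly_eqI) (simp add: coeff_map_poly)

lemma complex_poly_inject: "complex_poly p = complex_poly q \<Longrightarrow> p = q"
  by (rule poly_eqI) (metis coeff_map_poly of_real_0 of_real_eq_iff)

lemma complex_poly_Re_Im: "P = complex_poly (map_poly Re P) + smult \<i> (complex_poly (map_poly Im P))"
  by (rule poly_eqI) (simp add: coeff_map_poly complex_eq_iff)

lemma cnj_complex_poly_Re_Im:
  "map_poly cnj P = complex_poly (map_poly Re P) - smult \<i> (complex_poly (map_poly Im P))"
  by (rule poly_eqI) (simp add: coeff_map_poly complex_eq_iff)

text \<open>A common root of the real and imaginary parts of \<open>P\<close> would be a root of both
  \<open>P\<close> and its conjugate, and these cannot both lie in the upper half plane.\<close>
lemma coprime_Re_Im_upper_half_plane_roots: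
  fixes P :: "complex poly"
  assumes "P \<noteq> 0" "\<forall>w. poly P w = 0 \<longrightarrow> Im w > 0"
  shows "coprime (map_poly Re P) (map_poly Im P)"
proof (rule ccontr)
  define A where "A = map_poly Re P"
  define B where "B = map_poly Im P"
  assume "\<not> coprime (map_poly Re P) (map_poly Im P)"
  then obtain G where G: "G dvd A" "G dvd B" "\<not> is_unit G" unfolding A_def B_def
    by (rule not_coprimeE)
  have "G \<noteq> 0"
  proof
    assume "G = 0"
    then have "A = 0" "B = 0" using G by auto
    then show False using assms(1) complex_poly_Re_Im[of P] by (simp add: A_def B_def)
  qed
  then have "degree G \<noteq> 0" using G(3) is_unit_iff_degree by blast
  then have "\<not> constant (poly (complex_poly G))" by (simp add: constant_degree degree_map_poly)
  then obtain w where w: "poly (complex_poly G) w = 0" using fundamental_theorem_of_algebra by blast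
  have "poly (complex_poly A) w = 0" "poly (complex_poly B) w = 0"
    using G(1,2) w by (auto elim!: dvdE simp: complex_poly_mult)
  moreover have P_eq: "P = complex_poly A + smult \<i> (complex_poly B)"
    unfolding A_def B_def by (rule complex_poly_Re_Im)
  moreover have "map_poly cnj P = complex_poly A - smult \<i> (complex_poly B)"
    unfolding A_def B_def by (rule cnj_complex_poly_Re_Im)
  ultimately have "poly P w = 0" "poly (map_poly cnj P) w = 0" by simp_all
  then have "poly P w = 0" "poly P (cnj w) = 0" by (simp_all add: poly_cnj[symmetric])
  then have "Im w > 0" "Im (cnj w) > 0" using assms(2) by blast+
  then show False by simp
qed

lemma mult_cnj_eq_sum_squares_Re_Im:
  "P * map_poly cnj P = complex_poly ((map_poly Re P)\<^sup>2 + (map_poly Im P)\<^sup>2)"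
proof -
  define A B where "A = map_poly Re P" and "B = map_poly Im P"
  have "P * map_poly cnj P
        = (complex_poly A + smult \<i> (complex_poly B)) * (complex_poly A - smult \<i> (complex_poly B))"
    unfolding A_def B_def by (simp only: cnj_complex_poly_Re_Im, simp only: complex_poly_Re_Im[symmetric])
  also have "\<dots> = complex_poly A * complex_poly A + complex_poly B * complex_poly B"
    by (simp add: algebra_simps)
  finally show ?thesis
    by (simp add: A_def B_def power2_eq_square complex_poly_mult complex_poly_add)
qed

lemma no_real_roots_sum_of_squares:
  fixes H :: "real poly"
  assumes no_root: "\<forall>x. poly H x \<noteq> 0"
  obtains A B j where "H = smult (lead_coeff H) (A\<^sup>2 + B\<^sup>2)" "degree A = j" "degree B \<le> j"
    "degree H = 2 * j" "coprime A B" "A \<noteq> 0"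
proof -
  define HC where "HC = complex_poly H"
  have "map_poly cnj HC = HC" by (rule poly_eqI) (simp add: HC_def coeff_map_poly)
  moreover have "\<forall>x::real. poly HC (of_real x) \<noteq> 0"
    using no_root by (simp add: HC_def poly_map_of_real)
  ultimately obtain P where P: "HC = smult (lead_coeff HC) (P * map_poly cnj P)"
      "lead_coeff P = 1" "\<forall>w. poly P w = 0 \<longrightarrow> Im w > 0"
    using real_coeffs_no_real_roots_conj_factor by blast
  define A B where "A = map_poly Re P" and "B = map_poly Im P"
  have P_cnj_P: "P * map_poly cnj P = complex_poly (A\<^sup>2 + B\<^sup>2)"
    unfolding A_def B_def by (rule mult_cnj_eq_sum_squares_Re_Im)
  have lead_HC: "lead_coeff HC = of_real (lead_coeff H)"
    by (simp add: HC_def degree_map_poly coeff_map_poly)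
  have "HC = smult (of_real (lead_coeff H)) (complex_poly (A\<^sup>2 + B\<^sup>2))"
    using P(1) unfolding lead_HC P_cnj_P .
  then have H_eq: "H = smult (lead_coeff H) (A\<^sup>2 + B\<^sup>2)"
    by (intro complex_poly_inject) (simp add: complex_poly_smult HC_def)
  define j where "j = degree P"
  have "coeff A j = 1" using P(2) by (simp add: A_def j_def coeff_map_poly)
  moreover have "degree A \<le> j" "degree B \<le> j"
    unfolding A_def B_def j_def by (auto intro!: degree_le simp: coeff_map_poly coeff_eq_0)
  ultimately have deg_A: "degree A = j" by (metis antisym le_degree zero_neq_one)
  have "H \<noteq> 0" using no_root by auto
  have "P \<noteq> 0" using P(2) by auto
  moreover from this have "map_poly cnj P \<noteq> 0" by (metis map_poly_0 map_poly_cnj_cnj)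
  moreover have "degree (map_poly cnj P) = degree P" by (simp add: map_poly_degree_eq P(2))
  ultimately have "degree (P * map_poly cnj P) = 2 * j" by (simp add: degree_mult_eq j_def)
  moreover have "lead_coeff HC \<noteq> 0" using \<open>H \<noteq> 0\<close> lead_HC by simp
  ultimately have "degree HC = 2 * j" using P(1) by (metis degree_smult_eq)
  then have "degree H = 2 * j" by (simp add: HC_def degree_map_poly)
  moreover have "coprime A B"
    unfolding A_def B_def using \<open>P \<noteq> 0\<close> P(3) by (rule coprime_Re_Im_upper_half_plane_roots)
  moreover have "A \<noteq> 0" using \<open>coeff A j = 1\<close> by auto
  ultimately show ?thesis using that H_eq deg_A \<open>degree B \<le> j\<close> by blast
qed

lemma coprime_bezout_degree_bound:
  fixes A B T :: "real poly"
  assumes "coprime A B" "A \<noteq> 0" "degree A = j" "degree B \<le> j" "degree T \<le> 2 * j"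
  obtains \<alpha> \<beta> where "degree \<alpha> \<le> j" "degree \<beta> \<le> j" "T = A * \<alpha> + B * \<beta>"
proof -
  obtain x y where xy: "x * A + y * B = 1"
    using bezout_coefficients_fst_snd[of A B] assms(1) by auto
  define q where "q = (T * y) div A"
  define \<beta> where "\<beta> = (T * y) mod A"
  define \<alpha> where "\<alpha> = T * x + B * q"
  have Ty: "T * y = A * q + \<beta>" by (simp add: q_def \<beta>_def mult.commute)
  have T_eq: "T = A * \<alpha> + B * \<beta>"
  proof -
    have "T = T * (x * A + y * B)" using xy by simp
    also have "\<dots> = A * (T * x) + B * (T * y)" by (simp add: algebra_simps)
    also have "\<dots> = A * \<alpha> + B * \<beta>" unfolding Ty \<alpha>_def by (simp add: algebra_simps)
    finally show ?thesis .
  qed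
  have deg_\<beta>: "degree \<beta> \<le> j"
    using degree_mod_less[OF assms(2), of "T * y"] assms(3) by (auto simp: \<beta>_def)
  have "degree (B * \<beta>) \<le> 2 * j" using degree_mult_le[of B \<beta>] deg_\<beta> assms(4) by linarith
  then have "degree (A * \<alpha>) \<le> 2 * j"
    using assms(5) degree_diff_le T_eq by (metis add_diff_cancel_right')
  then have "degree \<alpha> \<le> j"
    using assms(2,3) by (cases "\<alpha> = 0") (auto simp: degree_mult_eq)
  with deg_\<beta> T_eq show ?thesis using that by blast
qed

lemma homogenize_monomial_power: "homogenize n ([:0, 1:] ^ n) = X1 ^ n"
proof (induction n)
  case 0
  show ?case by (rule poly_eqI) (simp add: coeff_homogenize)
next
  case (Suc n)
  have "homogenize (1 + n) ([:0, 1:] * [:0, 1:] ^ n) = homogenize 1 [:0, 1:] * homogenize n ([:0, 1:] ^ n)"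
    by (rule homogenize_mult) (use degree_power_le[of "[:0, 1::real:]" n] in simp_all)
  moreover have "homogenize 1 [:0, 1:] = X1"
    by (rule poly_eqI) (auto simp: coeff_homogenize X1_def coeff_pCons split: nat.splits)
  ultimately show ?case using Suc by simp
qed

lemma form_no_real_zero_sum_of_squares:
  assumes hom_h: "homogeneous k h" and no_zero: "\<forall>x y. (x, y) \<noteq> (0, 0) \<longrightarrow> eval_real h x y \<noteq> 0"
  obtains c j a b \<alpha> \<beta> where "c \<noteq> 0" "k = 2 * j" "homogeneous j a" "homogeneous j b"
    "homogeneous j \<alpha>" "homogeneous j \<beta>" "h = rscale c (a\<^sup>2 + b\<^sup>2)" "X1 ^ k = a * \<alpha> + b * \<beta>"
proof -
  define H where "H = dehomogenize h"
  have h_eq: "h = homogenize k H" and deg_H: "degree H \<le> k"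
    using hom_h homogenize_dehomogenize degree_dehomogenize H_def by auto
  have "poly H x \<noteq> 0" for x
    using no_zero eval_real_homogenize_1[OF deg_H, of x] h_eq by auto
  then obtain A B j where AB: "H = smult (lead_coeff H) (A\<^sup>2 + B\<^sup>2)" "degree A = j"
      "degree B \<le> j" "degree H = 2 * j" "coprime A B" "A \<noteq> 0"
    using no_real_roots_sum_of_squares by blast
  have "eval_real h 1 0 \<noteq> 0" using no_zero by auto
  then have "coeff H k \<noteq> 0" using h_eq eval_real_homogenize_0 by simp
  then have k: "k = 2 * j" using deg_H AB(4) le_degree by (metis antisym)
  have "degree ([:0, 1::real:] ^ k) \<le> 2 * j" using k degree_power_le[of "[:0, 1::real:]" k] by simp
  then obtain \<alpha> \<beta> where \<alpha>\<beta>: "degree \<alpha> \<le> j" "degree \<beta> \<le> j" "[:0, 1:] ^ k = A * \<alpha> + B * \<beta>"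
    using coprime_bezout_degree_bound[OF AB(5,6,2,3)] by blast
  have "h = homogenize (j + j) (smult (lead_coeff H) (A * A + B * B))"
    using h_eq AB(1) k by (simp add: power2_eq_square mult_2)
  also have "\<dots> = rscale (lead_coeff H) ((homogenize j A)\<^sup>2 + (homogenize j B)\<^sup>2)"
    by (simp add: homogenize_smult homogenize_add homogenize_mult AB(2,3) power2_eq_square)
  finally have "h = rscale (lead_coeff H) ((homogenize j A)\<^sup>2 + (homogenize j B)\<^sup>2)" .
  moreover have "X1 ^ k = homogenize (j + j) (A * \<alpha> + B * \<beta>)"
    using homogenize_monomial_power[of k] \<alpha>\<beta>(3) k by (simp add: mult_2)
  then have "X1 ^ k = homogenize j A * homogenize j \<alpha> + homogenize j B * homogenize j \<beta>"
    by (simp add: homogenize_add homogenize_mult AB(2,3) \<alpha>\<beta>(1,2))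
  moreover have "lead_coeff H \<noteq> 0" using \<open>coeff H k \<noteq> 0\<close> by auto
  ultimately show ?thesis using that k homogeneous_homogenize by blast
qed

lemma eval_real_nonzero_if_roots_among_sum_squares:
  assumes "coprime F G" "homogeneous n F" "homogeneous m G"
    and roots: "\<forall>z. is_root h z \<longrightarrow> is_root (F\<^sup>2 + G\<^sup>2) z" and "(x, y) \<noteq> (0, 0)"
  shows "eval_real h x y \<noteq> 0"
proof
  assume "eval_real h x y = 0"
  with \<open>(x, y) \<noteq> (0, 0)\<close> have "is_root h (of_real x, of_real y)"
    by (simp add: is_root_def eval_form_of_real)
  then have "is_root (F\<^sup>2 + G\<^sup>2) (of_real x, of_real y)" using roots by blast
  then have "eval_real (F\<^sup>2 + G\<^sup>2) x y = 0"
    unfolding is_root_def eval_form_of_real fst_conv snd_conv of_real_eq_0_iff by blast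
  then have "eval_real F x y = 0" "eval_real G x y = 0" by (simp_all add: sum_power2_eq_zero_iff)
  then show False using coprime_forms_no_common_real_zero assms(1-3,5) by blast
qed

lemma linear_coeff_eq_0_if_quadratic_nonneg:
  fixes b c :: real
  assumes "\<forall>t. 0 \<le> 2 * t * b + t * t * c"
  shows "b = 0"
proof (rule ccontr)
  assume "b \<noteq> 0"
  define m where "m = \<bar>c\<bar> + 1"
  have m: "m > 0" "\<bar>c\<bar> \<le> m" by (auto simp: m_def)
  define t where "t = - b / m"
  have "0 \<le> 2 * t * b + t * t * c" using assms by blast
  also have "t * t * c \<le> t * t * \<bar>c\<bar>" by (simp add: mult_left_mono)
  also have "\<dots> \<le> t * t * m" using m by (simp add: mult_left_mono)
  also have "2 * t * b + t * t * m = - (b * b) / m"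
    using m by (simp add: t_def field_simps power2_eq_square)
  finally have "0 \<le> - (b * b) / m" by simp
  moreover have "b * b > 0" using \<open>b \<noteq> 0\<close> by (metis not_real_square_gt_zero)
  then have "b * b / m > 0" using m(1) by (rule divide_pos_pos)
  ultimately show False by simp
qed

lemma rscale_eq_mult: "rscale c F = [:[:c:]:] * F"
  by (simp add: rscale_def)

lemma rscale_mult_rscale_inverse: "c \<noteq> 0 \<Longrightarrow> rscale c F * rscale (1 / c) G = F * G"
  by (simp add: rscale_def mult_smult_left mult_smult_right one_pCons[symmetric])

locale critical_point =
  fixes d :: nat and ip :: "bpoly \<Rightarrow> bpoly \<Rightarrow> real" and p u1 u2 :: bpoly
  assumes inner_product: "inner_product_on (2 * d) ip"
    and homogeneous_u1: "homogeneous d u1" and homogeneous_u2: "homogeneous d u2"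
    and homogeneous_p: "homogeneous (2 * d) p"
    and grad: "grad_zero d ip p (u1, u2)"
    and hess: "hess_psd d ip p (u1, u2)"
begin

definition residual :: bpoly where
  "residual = sigma (u1, u2) - p"

definition ell :: "bpoly \<Rightarrow> real" where
  "ell x = ip x residual"

lemma homogeneous_residual: "homogeneous (2 * d) residual"
  unfolding residual_def
  by (intro homogeneous_diff homogeneous_sigma homogeneous_u1 homogeneous_u2 homogeneous_p)

lemma ip_sym: "homogeneous (2 * d) x \<Longrightarrow> homogeneous (2 * d) y \<Longrightarrow> ip x y = ip y x"
  using inner_product unfolding inner_product_on_def forms_def mem_Collect_eq by blast

lemma ip_add_left:
  "homogeneous (2 * d) x \<Longrightarrow> homogeneous (2 * d) y \<Longrightarrow> homogeneous (2 * d) z \<Longrightarrow>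
    ip (x + y) z = ip x z + ip y z"
  using inner_product unfolding inner_product_on_def forms_def mem_Collect_eq by blast

lemma ip_rscale_left:
  "homogeneous (2 * d) x \<Longrightarrow> homogeneous (2 * d) y \<Longrightarrow> ip (rscale c x) y = c * ip x y"
  using inner_product unfolding inner_product_on_def forms_def mem_Collect_eq by blast

lemma ip_self_pos: "homogeneous (2 * d) x \<Longrightarrow> x \<noteq> 0 \<Longrightarrow> 0 < ip x x"
  using inner_product unfolding inner_product_on_def forms_def mem_Collect_eq by blast

lemma ip_0_left: "homogeneous (2 * d) y \<Longrightarrow> ip 0 y = 0"
  using ip_rscale_left[of 0 y 0] by (simp add: rscale_def)

lemma ip_self_nonneg: "homogeneous (2 * d) x \<Longrightarrow> 0 \<le> ip x x"
  using ip_self_pos ip_0_left[of 0] by (cases "x = 0") (auto intro: less_imp_le)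

lemma ell_add: "homogeneous (2 * d) x \<Longrightarrow> homogeneous (2 * d) y \<Longrightarrow> ell (x + y) = ell x + ell y"
  using ip_add_left homogeneous_residual by (simp add: ell_def)

lemma ell_rscale: "homogeneous (2 * d) x \<Longrightarrow> ell (rscale c x) = c * ell x"
  using ip_rscale_left homogeneous_residual by (simp add: ell_def)

lemma ell_0 [simp]: "ell 0 = 0"
  using ip_0_left homogeneous_residual by (simp add: ell_def)

lemma ell_A_op_eq_0: "homogeneous d v1 \<Longrightarrow> homogeneous d v2 \<Longrightarrow> ell (A_op (u1, u2) (v1, v2)) = 0"
  using grad by (simp add: grad_zero_def forms_def ell_def residual_def)

lemma ell_sigma_hess:
  "homogeneous d v1 \<Longrightarrow> homogeneous d v2 \<Longrightarrow>
    0 \<le> ell (sigma (v1, v2)) + 2 * ip (A_op (u1, u2) (v1, v2)) (A_op (u1, u2) (v1, v2))"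
  using hess by (simp add: hess_psd_def forms_def ell_def residual_def)

lemma ell_sigma_kernel_nonneg:
  "homogeneous d v1 \<Longrightarrow> homogeneous d v2 \<Longrightarrow> A_op (u1, u2) (v1, v2) = 0 \<Longrightarrow> 0 \<le> ell (sigma (v1, v2))"
  using ell_sigma_hess[of v1 v2] ip_0_left[of 0] by simp

text \<open>Along \<open>\<kappa> + t z\<close> with \<open>\<kappa>\<close> in the kernel of \<open>A\<^sub>u\<close>, the Hessian inequality is a quadratic in \<open>t\<close>
  whose constant term is \<open>ell (sigma \<kappa>)\<close>; if that vanishes, so must the linear term.\<close>
lemma ell_flat_kernel_direction:
  assumes hom: "homogeneous d \<kappa>1" "homogeneous d \<kappa>2" "homogeneous d z1" "homogeneous d z2"
    and kernel: "A_op (u1, u2) (\<kappa>1, \<kappa>2) = 0" and flat: "ell (sigma (\<kappa>1, \<kappa>2)) = 0"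
  shows "ell (\<kappa>1 * z1 + \<kappa>2 * z2) = 0"
proof -
  define \<phi> where "\<phi> = \<kappa>1 * z1 + \<kappa>2 * z2"
  define \<psi> where "\<psi> = sigma (z1, z2)"
  define Az where "Az = A_op (u1, u2) (z1, z2)"
  have hom_\<phi>: "homogeneous (2 * d) \<phi>"
    unfolding \<phi>_def mult_2 using hom by (simp add: homogeneous_add homogeneous_mult)
  have hom_\<psi>: "homogeneous (2 * d) \<psi>" using hom by (simp add: \<psi>_def homogeneous_sigma)
  have hom_Az: "homogeneous (2 * d) Az"
    using hom homogeneous_u1 homogeneous_u2 by (simp add: Az_def homogeneous_A_op)
  have hom_\<sigma>\<kappa>: "homogeneous (2 * d) (sigma (\<kappa>1, \<kappa>2))" using hom by (simp add: homogeneous_sigma)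
  have "0 \<le> 2 * t * ell \<phi> + t * t * (ell \<psi> + 2 * ip Az Az)" for t
  proof -
    define v1 v2 where "v1 = \<kappa>1 + rscale t z1" and "v2 = \<kappa>2 + rscale t z2"
    have hom_v: "homogeneous d v1" "homogeneous d v2"
      using hom by (simp_all add: v1_def v2_def homogeneous_add homogeneous_rscale)
    have "sigma (v1, v2) = sigma (\<kappa>1, \<kappa>2) + rscale t (\<phi> + \<phi>) + rscale t (rscale t \<psi>)"
      by (simp add: v1_def v2_def sigma_def rscale_eq_mult \<phi>_def \<psi>_def algebra_simps power2_eq_square)
    then have "ell (sigma (v1, v2)) = ell (sigma (\<kappa>1, \<kappa>2)) + t * (ell \<phi> + ell \<phi>) + t * (t * ell \<psi>)"
      by (simp only: ell_add ell_rscale homogeneous_add homogeneous_rscale hom_\<sigma>\<kappa> hom_\<phi> hom_\<psi>)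
    then have "ell (sigma (v1, v2)) = 2 * t * ell \<phi> + t * t * ell \<psi>"
      using flat by simp
    moreover have "A_op (u1, u2) (v1, v2) = rscale t Az"
      using kernel by (simp add: A_op_def v1_def v2_def Az_def rscale_eq_mult algebra_simps)
    moreover have "ip (rscale t Az) (rscale t Az) = t * t * ip Az Az"
      using hom_Az by (simp add: ip_rscale_left homogeneous_rscale ip_sym[of Az "rscale t Az"])
    ultimately show ?thesis using ell_sigma_hess[OF hom_v] by (simp add: algebra_simps)
  qed
  then show ?thesis unfolding \<phi>_def by (intro linear_coeff_eq_0_if_quadratic_nonneg) blast
qed

lemma ell_cone_nonneg:
  assumes "x \<in> cone_of (sigma ` A_kernel d (u1, u2))"
  shows "homogeneous (2 * d) x \<and> 0 \<le> ell x"
proof -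
  obtain cs ss where cs_ss: "length cs = length ss" "\<forall>c\<in>set cs. c \<ge> 0"
      "set ss \<subseteq> sigma ` A_kernel d (u1, u2)" "x = sum_list (map2 rscale cs ss)"
    using assms unfolding cone_of_def by blast
  have generators: "homogeneous (2 * d) s \<and> 0 \<le> ell s" if s_in: "s \<in> set ss" for s
  proof -
    obtain v where v: "v \<in> A_kernel d (u1, u2)" "s = sigma v" using s_in cs_ss(3) by blast
    obtain v1 v2 where "homogeneous d v1" "homogeneous d v2" "A_op (u1, u2) (v1, v2) = 0"
        "s = sigma (v1, v2)"
      using v by (cases v) (auto simp: A_kernel_def forms_def)
    then show ?thesis using ell_sigma_kernel_nonneg homogeneous_sigma by simp
  qed
  from cs_ss(1,2) generators show ?thesis unfolding cs_ss(4)
  proof (induction cs ss rule: list_induct2)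
    case (Cons c cs s ss)
    then have "homogeneous (2 * d) s" "0 \<le> ell s" "0 \<le> c" by auto
    with Cons show ?case
      by (simp add: ell_add ell_rscale homogeneous_add homogeneous_rscale)
  qed simp
qed

lemma ell_nonneg_if_mem_image_plus_cone:
  assumes image_null: "\<forall>v\<in>forms d \<times> forms d. ell (A_op w v) = 0"
    and "homogeneous (2 * d) x"
    and "x \<in> set_plus_b (A_image d w) (cone_of (sigma ` A_kernel d (u1, u2)))"
  shows "0 \<le> ell x"
proof -
  obtain a b where ab: "x = a + b" "a \<in> A_image d w" "b \<in> cone_of (sigma ` A_kernel d (u1, u2))"
    using assms(3) by (auto simp: set_plus_b_def)
  have "ell a = 0" using ab(2) image_null by (auto simp: A_image_def)
  moreover have "homogeneous (2 * d) b" "0 \<le> ell b" using ell_cone_nonneg[OF ab(3)] by auto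
  moreover have "homogeneous (2 * d) a"
    using homogeneous_diff[OF assms(2) \<open>homogeneous (2 * d) b\<close>] ab(1) by simp
  ultimately show ?thesis using ab(1) by (simp add: ell_add)
qed

lemma f_obj_eq_0_if_ell_nonneg:
  assumes "0 \<le> ell p"
  shows "f_obj ip p (u1, u2) = 0"
proof -
  have "A_op (u1, u2) (u1, u2) = sigma (u1, u2)" by (simp add: A_op_def sigma_def power2_eq_square)
  then have "ell (sigma (u1, u2)) = 0" using ell_A_op_eq_0 homogeneous_u1 homogeneous_u2 by metis
  moreover have "sigma (u1, u2) = residual + p" by (simp add: residual_def)
  ultimately have "ell residual \<le> 0"
    using assms homogeneous_residual homogeneous_p by (simp add: ell_add)
  moreover have "0 \<le> ip residual residual" by (rule ip_self_nonneg[OF homogeneous_residual])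
  ultimately show ?thesis by (simp add: f_obj_def ell_def residual_def)
qed

end

locale factored_critical_point = critical_point +
  fixes w1 w2 h :: bpoly and k :: nat
  assumes u1_eq: "u1 = w1 * h" and u2_eq: "u2 = w2 * h"
    and homogeneous_w1: "homogeneous (d - k) w1" and homogeneous_w2: "homogeneous (d - k) w2"
    and k_le_d: "k \<le> d"
begin

lemma homogeneous_w_mult:
  assumes "homogeneous k \<mu>"
  shows "homogeneous d (w1 * \<mu>)" "homogeneous d (w2 * \<mu>)"
  using homogeneous_mult[OF homogeneous_w1 assms] homogeneous_mult[OF homogeneous_w2 assms] k_le_d
  by simp_all

lemma kernel_direction: "A_op (u1, u2) (- (w2 * \<mu>), w1 * \<mu>) = 0"
  by (simp add: A_op_def u1_eq u2_eq algebra_simps)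

lemma ell_sum_squares_nonneg:
  assumes "homogeneous k \<mu>"
  shows "0 \<le> ell ((w1\<^sup>2 + w2\<^sup>2) * \<mu>\<^sup>2)"
proof -
  have "sigma (- (w2 * \<mu>), w1 * \<mu>) = (w1\<^sup>2 + w2\<^sup>2) * \<mu>\<^sup>2"
    by (simp add: sigma_def algebra_simps power2_eq_square)
  then show ?thesis
    using ell_sigma_kernel_nonneg[OF _ _ kernel_direction] homogeneous_w_mult[OF assms]
    by (metis homogeneous_uminus)
qed

text \<open>Stationarity along \<open>(w\<^sub>1 \<rho>, w\<^sub>2 \<rho>)\<close> kills \<open>ell ((w\<^sub>1\<^sup>2 + w\<^sub>2\<^sup>2) h \<rho>)\<close>, which splits into two
  nonnegative summands.\<close>
lemma ell_sum_squares_eq_0_if_sum_squares_multiple: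
  assumes hom: "homogeneous k \<mu>" "homogeneous k \<mu>'" "homogeneous k \<rho>"
    and sum_eq: "\<mu>\<^sup>2 + \<mu>'\<^sup>2 = h * \<rho>"
  shows "ell ((w1\<^sup>2 + w2\<^sup>2) * \<mu>\<^sup>2) = 0"
proof -
  have hom_term: "homogeneous (2 * d) ((w1\<^sup>2 + w2\<^sup>2) * \<nu>\<^sup>2)" if "homogeneous k \<nu>" for \<nu>
  proof -
    have "(w1\<^sup>2 + w2\<^sup>2) * \<nu>\<^sup>2 = sigma (w1 * \<nu>, w2 * \<nu>)"
      by (simp add: sigma_def algebra_simps power2_eq_square)
    then show ?thesis using homogeneous_w_mult[OF that] by (simp add: homogeneous_sigma)
  qed
  have "A_op (u1, u2) (w1 * \<rho>, w2 * \<rho>) = (w1\<^sup>2 + w2\<^sup>2) * (h * \<rho>)"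
    by (simp add: A_op_def u1_eq u2_eq algebra_simps power2_eq_square)
  also have "\<dots> = (w1\<^sup>2 + w2\<^sup>2) * \<mu>\<^sup>2 + (w1\<^sup>2 + w2\<^sup>2) * \<mu>'\<^sup>2"
    unfolding sum_eq[symmetric] by (simp add: algebra_simps)
  finally have "ell ((w1\<^sup>2 + w2\<^sup>2) * \<mu>\<^sup>2) + ell ((w1\<^sup>2 + w2\<^sup>2) * \<mu>'\<^sup>2) = 0"
    using ell_A_op_eq_0 homogeneous_w_mult[OF hom(3)] hom_term hom by (metis ell_add)
  then show ?thesis using ell_sum_squares_nonneg hom by (metis add_nonneg_eq_0_iff)
qed

lemma ell_mult_A_op_eq_0:
  assumes "homogeneous k \<mu>" "ell ((w1\<^sup>2 + w2\<^sup>2) * \<mu>\<^sup>2) = 0" "homogeneous d v1" "homogeneous d v2"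
  shows "ell (\<mu> * A_op (w1, w2) (v1, v2)) = 0"
proof -
  have "sigma (- (w2 * \<mu>), w1 * \<mu>) = (w1\<^sup>2 + w2\<^sup>2) * \<mu>\<^sup>2"
    by (simp add: sigma_def algebra_simps power2_eq_square)
  then have "ell (- (w2 * \<mu>) * - v2 + w1 * \<mu> * v1) = 0"
    using homogeneous_w_mult[OF assms(1)] assms
    by (intro ell_flat_kernel_direction[OF _ _ _ _ kernel_direction]) (simp_all add: homogeneous_uminus)
  moreover have "\<mu> * A_op (w1, w2) (v1, v2) = - (w2 * \<mu>) * - v2 + w1 * \<mu> * v1"
    by (simp add: A_op_def algebra_simps)
  ultimately show ?thesis by simp
qed

lemma ell_A_op_X1_power_eq_0:
  assumes "c \<noteq> 0" "k = 2 * j" "homogeneous j a" "homogeneous j b" "homogeneous j \<alpha>" "homogeneous j \<beta>"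
    and h_eq: "h = rscale c (a\<^sup>2 + b\<^sup>2)" and X1_eq: "X1 ^ k = a * \<alpha> + b * \<beta>"
    and hom_v: "homogeneous d v1" "homogeneous d v2"
  shows "ell (A_op (w1 * X1 ^ k, w2 * X1 ^ k) (v1, v2)) = 0"
proof -
  have hom_prod: "homogeneous k (x * y)" if "homogeneous j x" "homogeneous j y" for x y
    using homogeneous_mult[OF that] assms(2) by (simp add: mult_2)
  have hom_quot: "homogeneous k (rscale (1 / c) (y\<^sup>2))" if "homogeneous j y" for y
    using homogeneous_rscale[OF homogeneous_power2[OF that]] assms(2) by simp
  have sum_eq: "(x * y)\<^sup>2 + (z * y)\<^sup>2 = h * rscale (1 / c) (y\<^sup>2)" if "x\<^sup>2 + z\<^sup>2 = a\<^sup>2 + b\<^sup>2" for x y z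
    unfolding h_eq rscale_mult_rscale_inverse[OF assms(1)] that[symmetric]
    by (simp add: power_mult_distrib algebra_simps)
  have "ell ((w1\<^sup>2 + w2\<^sup>2) * (a * \<alpha>)\<^sup>2) = 0"
    by (rule ell_sum_squares_eq_0_if_sum_squares_multiple[OF hom_prod hom_prod hom_quot sum_eq])
      (use assms in simp_all)
  moreover have "ell ((w1\<^sup>2 + w2\<^sup>2) * (b * \<beta>)\<^sup>2) = 0"
    by (rule ell_sum_squares_eq_0_if_sum_squares_multiple[OF hom_prod hom_prod hom_quot sum_eq])
      (use assms in \<open>simp_all add: add.commute\<close>)
  moreover have "homogeneous (2 * d) (\<mu> * A_op (w1, w2) (v1, v2))" if "homogeneous k \<mu>" for \<mu>
    using homogeneous_A_op[OF homogeneous_w_mult[OF that] hom_v]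
    by (simp add: A_op_def algebra_simps)
  moreover have "A_op (w1 * X1 ^ k, w2 * X1 ^ k) (v1, v2)
      = a * \<alpha> * A_op (w1, w2) (v1, v2) + b * \<beta> * A_op (w1, w2) (v1, v2)"
    by (simp add: A_op_def X1_eq algebra_simps)
  ultimately show ?thesis
    using ell_mult_A_op_eq_0 hom_v hom_prod assms(3-6) by (simp add: ell_add)
qed

end

theorem proposition4p4:
  fixes d k :: nat and ip :: "bpoly \<Rightarrow> bpoly \<Rightarrow> real"
    and u1 u2 p g h u1' u2' :: bpoly
  assumes ip: "inner_product_on (2 * d) ip"
    and u1: "u1 \<in> forms d" and u2: "u2 \<in> forms d"
    and p: "p \<in> sos_forms d"
    and grad: "grad_zero d ip p (u1, u2)"
    and hess: "hess_psd d ip p (u1, u2)"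
    and forms: "is_form g" "is_form u1'" "is_form u2'"
    and hk: "homogeneous k h"
    and fact1: "u1 = u1' * g * h" and fact2: "u2 = u2' * g * h"
    and gcd_u: "is_gcd (g * h) u1 u2"
    and cop1: "coprime u1' u2'"
    and cop2: "coprime (u1'\<^sup>2 + u2'\<^sup>2) g"
    and roots: "\<forall>z. is_root h z \<longrightarrow> is_root (u1'\<^sup>2 + u2'\<^sup>2) z"
    and mem: "p \<in> set_plus_b (A_image d (u1' * g * X1 ^ k, u2' * g * X1 ^ k))
                              (cone_of (sigma ` A_kernel d (u1, u2)))"
  shows "f_obj ip p (u1, u2) = 0"
proof -
  obtain e1 e2 eg where hom: "homogeneous e1 u1'" "homogeneous e2 u2'" "homogeneous eg g"
    using forms by (auto simp: is_form_def)
  interpret critical_point d ip p u1 u2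
    using ip u1 u2 homogeneous_sos_forms[OF p] grad hess by unfold_locales (simp_all add: forms_def)
  have no_zero: "\<forall>x y. (x, y) \<noteq> (0, 0) \<longrightarrow> eval_real h x y \<noteq> 0"
    using eval_real_nonzero_if_roots_among_sum_squares[OF cop1 hom(1,2) roots] by blast
  then have "h \<noteq> 0" by (metis eval_real_0 prod.inject zero_neq_one)
  obtain c j a b \<alpha> \<beta> where decomposition: "c \<noteq> 0" "k = 2 * j" "homogeneous j a" "homogeneous j b"
      "homogeneous j \<alpha>" "homogeneous j \<beta>" "h = rscale c (a\<^sup>2 + b\<^sup>2)" "X1 ^ k = a * \<alpha> + b * \<beta>"
    using form_no_real_zero_sum_of_squares[OF hk no_zero] by blast
  have "\<forall>v\<in>forms d \<times> forms d. ell (A_op (u1' * g * X1 ^ k, u2' * g * X1 ^ k) v) = 0"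
  proof (cases "u1' * g = 0 \<and> u2' * g = 0")
    case True
    then show ?thesis by (simp add: A_op_def del: mult_eq_0_iff)
  next
    case False
    have "homogeneous (d - k) (u1' * g) \<and> (u1' * g \<noteq> 0 \<longrightarrow> k \<le> d)"
      using homogeneous_cofactor[OF homogeneous_mult[OF hom(1,3)] hk \<open>h \<noteq> 0\<close>] u1 fact1
      by (simp add: forms_def)
    moreover have "homogeneous (d - k) (u2' * g) \<and> (u2' * g \<noteq> 0 \<longrightarrow> k \<le> d)"
      using homogeneous_cofactor[OF homogeneous_mult[OF hom(2,3)] hk \<open>h \<noteq> 0\<close>] u2 fact2
      by (simp add: forms_def)
    ultimately interpret factored_critical_point d ip p u1 u2 "u1' * g" "u2' * g" h k
      using False fact1 fact2 by unfold_locales auto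
    show ?thesis using ell_A_op_X1_power_eq_0[OF decomposition] by (auto simp: forms_def)
  qed
  then have "0 \<le> ell p" using ell_nonneg_if_mem_image_plus_cone homogeneous_p mem by blast
  then show ?thesis by (rule f_obj_eq_0_if_ell_nonneg)
qed

end
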